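(* Let $X_i$ be a nonnegative random variable with survival function $\overline{F}_i(x) = \mathbb{P}(X_i > x)$, and for $\theta \in (0,1)$ define $$t_i(\theta) := \sup\{ t \geq 0 : \theta \, \overline{F}_i(x) \leq \overline{F}_i(x/\theta) \text{ for all } x \in [0,t) \}.$$ Then $t_i(\theta) > 0$ for every $\theta \in (0,1)$. *)

theory Defs
  imports "HOL-Probability.Probability"
begin

definition survival :: "'a measure \<Rightarrow> ('a \<Rightarrow> real) \<Rightarrow> real \<Rightarrow> real" where
  "survival M X x = measure M {\<omega> \<in> space M. X \<omega> > x}"

text \<open>t(theta) as a supremum in the extended reals (it may be infinite).\<close>
definition t_theta :: "'a measure \<Rightarrow> ('a \<Rightarrow> real) \<Rightarrow> real \<Rightarrow> ereal" where
  "t_theta M X \<theta> = Sup {ereal t | t. t \<ge> 0 \<and>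
      (\<forall>x\<in>{0..<t}. \<theta> * survival M X x \<le> survival M X (x / \<theta>))}"

end

theory Submission
  imports Defs
begin

text \<open>The survival function is nonincreasing and right-continuous, being one minus the
  distribution function of X. If it vanishes at 0 it vanishes on [0, \<infinity>) and the
  inequality is trivial. Otherwise \<theta> F(0) < F(0), so right-continuity gives
  F(y) > \<theta> F(0) \<ge> \<theta> F(x) for all small y > 0 and x \<ge> 0, in particular for y = x / \<theta>.\<close>

lemma (in prob_space) survival_eq_1_minus_cdf:
  assumes "X \<in> borel_measurable M"
  shows "survival M X x = 1 - cdf (distr M borel X) x"
proof -
  have "{\<omega> \<in> space M. X \<omega> > x} = space M - (X -` {..x} \<inter> space M)"
    by auto
  then show ?thesis
    using assms by (simp add: survival_def cdf_def measure_distr prob_compl)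
qed

lemma (in prob_space) continuous_at_right_survival:
  assumes "X \<in> borel_measurable M"
  shows "continuous (at_right a) (survival M X)"
  unfolding survival_eq_1_minus_cdf[OF assms, abs_def]
  using assms
  by (intro continuous_intros finite_borel_measure.cdf_is_right_cont
      real_distribution.finite_borel_measure_M) simp

lemma (in finite_measure) antimono_survival:
  assumes "X \<in> borel_measurable M"
  shows "antimono (survival M X)"
  using assms by (intro antimonoI) (auto simp: survival_def intro!: finite_measure_mono)

lemma survival_nonneg: "0 \<le> survival M X x"
  by (simp add: survival_def)

lemma antimono_scaled_le_dilation_near_0:
  fixes F :: "real \<Rightarrow> real" and \<theta> :: real
  assumes "antimono F" and "continuous (at_right 0) F" and "\<And>x. 0 \<le> F x"
    and "0 < \<theta>" and "\<theta> < 1"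
  shows "\<exists>t>0. \<forall>x\<in>{0..<t}. \<theta> * F x \<le> F (x / \<theta>)"
proof (cases "F 0 = 0")
  case True
  have "\<theta> * F x \<le> F (x / \<theta>)" if "0 \<le> x" for x
  proof -
    have "F x = 0"
      using antimonoD[OF assms(1) that] assms(3)[of x] True by simp
    then show ?thesis
      using assms(3) by simp
  qed
  then show ?thesis
    by (intro exI[of _ 1]) simp
next
  case False
  have "(F \<longlongrightarrow> F 0) (at_right 0)"
    using assms(2) by (simp add: continuous_within)
  moreover from False have "\<theta> * F 0 < F 0"
    using assms(3-5) by (simp add: less_le)
  ultimately have "\<forall>\<^sub>F y in at_right 0. \<theta> * F 0 < F y"
    by (rule order_tendstoD(1))
  then obtain b where "b > 0" and b: "\<And>y. 0 < y \<Longrightarrow> y < b \<Longrightarrow> \<theta> * F 0 < F y"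
    unfolding eventually_at_right_field by auto
  have "\<theta> * F x \<le> F (x / \<theta>)" if "0 \<le> x" "x < \<theta> * b" for x
  proof -
    have "\<theta> * F x \<le> \<theta> * F 0"
      using antimonoD[OF assms(1) \<open>0 \<le> x\<close>] assms(4) by simp
    also have "\<dots> \<le> F (x / \<theta>)"
    proof (cases "x = 0")
      case True
      then show ?thesis
        using \<open>\<theta> * F 0 < F 0\<close> by simp
    next
      case False
      have "0 < x / \<theta>" "x / \<theta> < b"
        using False that assms(4) by (simp_all add: pos_divide_less_eq mult.commute)
      then show ?thesis
        using b by (simp add: less_imp_le)
    qed
    finally show ?thesis .
  qed
  then show ?thesis
    using \<open>b > 0\<close> assms(4) by (intro exI[of _ "\<theta> * b"]) simp
qed

lemma t_theta_gt_0I: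
  assumes "t > 0" and "\<forall>x\<in>{0..<t}. \<theta> * survival M X x \<le> survival M X (x / \<theta>)"
  shows "t_theta M X \<theta> > 0"
proof -
  have "ereal t \<le> t_theta M X \<theta>"
    unfolding t_theta_def using assms by (intro Sup_upper) auto
  then show ?thesis
    using assms(1) by (meson ereal_less(2) less_le_trans)
qed

theorem lemma12:
  fixes M :: "'a measure" and X :: "'a \<Rightarrow> real" and \<theta> :: real
  assumes "prob_space M"
    and "X \<in> borel_measurable M"
    and "AE \<omega> in M. X \<omega> \<ge> 0"
    and "0 < \<theta>" and "\<theta> < 1"
  shows "t_theta M X \<theta> > 0"
proof -
  interpret prob_space M by fact
  obtain t where "t > 0" "\<forall>x\<in>{0..<t}. \<theta> * survival M X x \<le> survival M X (x / \<theta>)"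
    using antimono_scaled_le_dilation_near_0[OF antimono_survival continuous_at_right_survival
        survival_nonneg] assms(2,4,5)
    by blast
  then show ?thesis
    by (rule t_theta_gt_0I)
qed

end
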